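(* Fix $N\ge 1$, a statistic $c$ and a real $\theta>0$, and consider the weighted game of best choice. Let $A$ be the set of positive prefixes that are minimal with respect to prefix containment, i.e. positive prefixes $p$ such that no prefix $p'\neq p$ contained in $p$ is positive. Then every $\pi\in\mathfrak S_N$ is $p$-prefixed for exactly one $p\in A$, and the strategy "accept candidate $i$ as soon as the current prefix flattening $\pi^{(i)}$ belongs to $A$" maximizes the probability of winning among all strategies. The maximal winning probability equals $\bar S(1)$, where $1\in\mathfrak S_1$, and also equals $$\frac{\sum_{p\in A} D(p)\,S(p)}{\sum_{\sigma\in\mathfrak S_N}\theta^{c(\sigma)}}.$$
   Context: Permutations of $\{1,\dots,m\}$ are written in one-line notation $\pi=\pi_1\pi_2\cdots\pi_m$; $\mathfrak S_m$ is the set of all of them. An entry $\pi_j$ is a left-to-right maximum of $\pi$ if $\pi_j>\pi_i$ for all $i<j$. A statistic is a function $c:\bigcup_{m=1}^N\mathfrak S_m\to\mathbb Z_{\ge0}$. Fix $N\ge1$, a statistic $c$ and a real $\theta>0$. The weighted game of best choice is played as follows. A permutation $\pi\in\mathfrak S_N$ is chosen with probability $\theta^{c(\pi)}/\sum_{\sigma\in\mathfrak S_N}\theta^{c(\sigma)}$. For $i=1,\dots,N$, the player is shown the $i$-th prefix flattening $\pi^{(i)}$, which is the unique element of $\mathfrak S_i$ with the same relative order as $\pi_1,\dots,\pi_i$. Using only this information (note that $\pi^{(i)}$ determines $\pi^{(1)},\dots,\pi^{(i-1)}$), the player decides whether to accept candidate $i$, which ends the game, or to reject it. If candidates $1,\dots,N-1$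 are all rejected, candidate $N$ is accepted. The player wins iff the accepted candidate $i$ has $\pi_i=N$. A strategy is any such decision rule. A prefix is an element of $\bigcup_{m=1}^N\mathfrak S_m$. For $p\in\mathfrak S_m$ and $\pi\in\mathfrak S_N$: - $\pi$ is $p$-prefixed if $\pi^{(m)}=p$; - $\pi$ is $p$-winnable if $\pi$ is $p$-prefixed and $\pi_m=N$. A prefix $r\in\mathfrak S_n$ contains a prefix $p\in\mathfrak S_m$ ($m\le n$) if the $m$-th prefix flattening of $r$ equals $p$. Define: - $D(p)=\sum_{p\text{-prefixed }\pi}\theta^{c(\pi)}$; - the strike probability $S(p)=\big(\sum_{p\text{-winnable }\pi}\theta^{c(\pi)}\big)/D(p)$; - the open probability $S^{c}(p)$: it equals $0$ if $p\in\mathfrak S_N$, and for $p\in\mathfrak S_m$ with $m<N$ it equals $S^{c}(p)=\big(\sum_{q\in\mathfrak S_{m+1},\,q\text{ contains }p}D(q)\bar S(q)\big)/D(p)$; - the closed probability $\bar S(p)=\max(S(p),S^c(p))$. Equivalently, $S^c(p)$ (resp. $\bar S(p)$) is the largest conditional probability of winning, given that $\pi$ is $p$-prefixed, over strategies that reject candidates $1,\dots,m$ (resp. $1,\dots,m-1$). A prefix $p$ is positive if $S(p)\ge S^c(p)$, and negative otherwise. *)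

theory Defs
  imports Complex_Main
begin

definition perms :: "nat \<Rightarrow> nat list set" where
  "perms m = {xs. distinct xs \<and> set xs = {1..m}}"

definition flat :: "nat list \<Rightarrow> nat list" where
  "flat xs = map (\<lambda>x. card {y \<in> set xs. y \<le> x}) xs"

definition pflat :: "nat \<Rightarrow> nat list \<Rightarrow> nat list" where
  "pflat i xs = flat (take i xs)"

definition prefixes :: "nat \<Rightarrow> nat list set" where
  "prefixes N = (\<Union>m\<in>{1..N}. perms m)"

definition contains :: "nat list \<Rightarrow> nat list \<Rightarrow> bool" where
  "contains r p \<longleftrightarrow> length p \<le> length r \<and> pflat (length p) r = p"

definition prefixed :: "nat \<Rightarrow> nat list \<Rightarrow> nat list \<Rightarrow> bool" where
  "prefixed N p \<pi> \<longleftrightarrow> \<pi> \<in> perms N \<and> pflat (length p) \<pi> = p"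

definition winnable :: "nat \<Rightarrow> nat list \<Rightarrow> nat list \<Rightarrow> bool" where
  "winnable N p \<pi> \<longleftrightarrow> prefixed N p \<pi> \<and> \<pi> ! (length p - 1) = N"

definition Zsum :: "nat \<Rightarrow> (nat list \<Rightarrow> nat) \<Rightarrow> real \<Rightarrow> real" where
  "Zsum N c \<theta> = (\<Sum>\<sigma>\<in>perms N. \<theta> ^ c \<sigma>)"

definition Dw :: "nat \<Rightarrow> (nat list \<Rightarrow> nat) \<Rightarrow> real \<Rightarrow> nat list \<Rightarrow> real" where
  "Dw N c \<theta> p = (\<Sum>\<pi>\<in>{\<pi>\<in>perms N. prefixed N p \<pi>}. \<theta> ^ c \<pi>)"

definition Sstrike :: "nat \<Rightarrow> (nat list \<Rightarrow> nat) \<Rightarrow> real \<Rightarrow> nat list \<Rightarrow> real" where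
  "Sstrike N c \<theta> p = (\<Sum>\<pi>\<in>{\<pi>\<in>perms N. winnable N p \<pi>}. \<theta> ^ c \<pi>) / Dw N c \<theta> p"

definition ext :: "nat list \<Rightarrow> nat list set" where
  "ext p = {q \<in> perms (Suc (length p)). contains q p}"

text \<open>Auxiliary recursion: Sbar_rec k p is the closed probability of p when length p = N - k.\<close>
fun Sbar_rec :: "nat \<Rightarrow> (nat list \<Rightarrow> nat) \<Rightarrow> real \<Rightarrow> nat \<Rightarrow> nat list \<Rightarrow> real" where
  "Sbar_rec N c \<theta> 0 p = max (Sstrike N c \<theta> p) 0"
| "Sbar_rec N c \<theta> (Suc k) p =
     max (Sstrike N c \<theta> p)
         ((\<Sum>q\<in>ext p. Dw N c \<theta> q * Sbar_rec N c \<theta> k q) / Dw N c \<theta> p)"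

definition Sopen :: "nat \<Rightarrow> (nat list \<Rightarrow> nat) \<Rightarrow> real \<Rightarrow> nat list \<Rightarrow> real" where
  "Sopen N c \<theta> p =
     (if length p \<ge> N then 0
      else (\<Sum>q\<in>ext p. Dw N c \<theta> q * Sbar_rec N c \<theta> (N - Suc (length p)) q) / Dw N c \<theta> p)"

definition Sclosed :: "nat \<Rightarrow> (nat list \<Rightarrow> nat) \<Rightarrow> real \<Rightarrow> nat list \<Rightarrow> real" where
  "Sclosed N c \<theta> p = max (Sstrike N c \<theta> p) (Sopen N c \<theta> p)"

definition positive :: "nat \<Rightarrow> (nat list \<Rightarrow> nat) \<Rightarrow> real \<Rightarrow> nat list \<Rightarrow> bool" where
  "positive N c \<theta> p \<longleftrightarrow> Sstrike N c \<theta> p \<ge> Sopen N c \<theta> p"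

definition minpos :: "nat \<Rightarrow> (nat list \<Rightarrow> nat) \<Rightarrow> real \<Rightarrow> nat list set" where
  "minpos N c \<theta> = {p \<in> prefixes N. positive N c \<theta> p \<and>
      (\<forall>p'\<in>prefixes N. contains p p' \<and> p' \<noteq> p \<longrightarrow> \<not> positive N c \<theta> p')}"

text \<open>A strategy is a decision rule s on prefix flattenings (True = accept).
  The accepted candidate (1-based index): first i in 1..N with s(pi^(i)), or N.\<close>
definition accepted :: "nat \<Rightarrow> (nat list \<Rightarrow> bool) \<Rightarrow> nat list \<Rightarrow> nat" where
  "accepted N s \<pi> = (LEAST i. 1 \<le> i \<and> i \<le> N \<and> (s (pflat i \<pi>) \<or> i = N))"

definition wins :: "nat \<Rightarrow> (nat list \<Rightarrow> bool) \<Rightarrow> nat list \<Rightarrow> bool" where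
  "wins N s \<pi> \<longleftrightarrow> \<pi> ! (accepted N s \<pi> - 1) = N"

definition win_prob :: "nat \<Rightarrow> (nat list \<Rightarrow> nat) \<Rightarrow> real \<Rightarrow> (nat list \<Rightarrow> bool) \<Rightarrow> real" where
  "win_prob N c \<theta> s = (\<Sum>\<pi>\<in>{\<pi>\<in>perms N. wins N s \<pi>}. \<theta> ^ c \<pi>) / Zsum N c \<theta>"

end

theory Submission
  imports Defs
begin

text \<open>Backward induction on the length of a prefix p. Among the permutations with prefix
  flattening p, a strategy that has rejected the earlier candidates either accepts candidate
  length p, winning weight D(p) S(p), or rejects it and faces the same problem for each one-step
  extension of p; since D(p) S^c(p) is the sum of D(q) Sbar(q) over these extensions, the weight
  it wins is at most D(p) Sbar(p). Stopping exactly at minimal positive prefixes attains this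
  bound: before the first positive prefix Sbar = S^c and the strategy continues, at it
  Sbar = S and the strategy stops. Full-length prefixes are positive, so every permutation has
  exactly one minimal positive prefix, and grouping the won permutations by it gives the sum
  formula.\<close>

subsection \<open>Flattening\<close>

lemma length_perms: "xs \<in> perms n \<Longrightarrow> length xs = n"
  unfolding perms_def using distinct_card by fastforce

lemma finite_perms: "finite (perms n)"
proof (rule finite_subset)
  show "perms n \<subseteq> {xs. set xs \<subseteq> {1..n} \<and> length xs = n}"
    using length_perms unfolding perms_def by auto
qed (simp add: finite_lists_length_eq)

lemma strict_mono_on_rank: "finite S \<Longrightarrow> strict_mono_on S (\<lambda>x::nat. card {y\<in>S. y \<le> x})"
  by (intro strict_mono_onI psubset_card_mono) (auto simp: set_eq_iff, metis leD order_refl)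

lemma flat_map_strict_mono:
  assumes "strict_mono_on (set xs) f"
  shows "flat (map f xs) = flat xs"
proof -
  have inj: "inj_on f (set xs)" using assms strict_mono_on_imp_inj_on by blast
  have "card {y \<in> f ` set xs. y \<le> f x} = card {y\<in>set xs. y \<le> x}" if "x \<in> set xs" for x
  proof -
    have "{y \<in> f ` set xs. y \<le> f x} = f ` {y\<in>set xs. y \<le> x}"
      using strict_mono_on_less_eq[OF assms _ that] by auto
    thus ?thesis by (simp add: card_image inj_on_subset[OF inj])
  qed
  thus ?thesis unfolding flat_def by simp
qed

lemma flat_in_perms:
  assumes "distinct xs" shows "flat xs \<in> perms (length xs)"
proof -
  define r where "r = (\<lambda>x::nat. card {y\<in>set xs. y \<le> x})"
  have "inj_on r (set xs)"
    unfolding r_def by (intro strict_mono_on_imp_inj_on strict_mono_on_rank) simp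
  hence card: "card (r ` set xs) = length xs" and dist: "distinct (map r xs)"
    using assms by (simp_all add: card_image distinct_card distinct_map)
  have "r x \<in> {1..length xs}" if "x \<in> set xs" for x
  proof -
    have "1 \<le> r x" using that unfolding r_def by (auto simp: Suc_le_eq card_gt_0_iff)
    moreover have "r x \<le> card (set xs)" unfolding r_def by (rule card_mono) auto
    ultimately show ?thesis using assms by (simp add: distinct_card)
  qed
  hence "r ` set xs = {1..length xs}" using card by (intro card_subset_eq) auto
  thus ?thesis using dist unfolding perms_def flat_def r_def by simp
qed

lemma pflat_in_perms: "\<pi> \<in> perms N \<Longrightarrow> i \<le> N \<Longrightarrow> pflat i \<pi> \<in> perms i"
  unfolding pflat_def using flat_in_perms[of "take i \<pi>"] length_perms[of \<pi> N]
  by (auto simp: perms_def min_def)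

lemma pflat_pflat:
  assumes "j \<le> i" shows "pflat j (pflat i \<pi>) = pflat j \<pi>"
proof -
  define ys where "ys = take i \<pi>"
  define r where "r = (\<lambda>x::nat. card {y\<in>set ys. y \<le> x})"
  have "strict_mono_on (set (take j ys)) r"
    using strict_mono_on_rank[of "set ys"] set_take_subset[of j ys]
    unfolding r_def strict_mono_on_def by blast
  moreover have "take j (flat ys) = map r (take j ys)" unfolding flat_def r_def by (simp add: take_map)
  ultimately have "flat (take j (flat ys)) = flat (take j ys)" by (simp add: flat_map_strict_mono)
  thus ?thesis using assms unfolding pflat_def ys_def by (simp add: min_def)
qed

lemma flat_perms:
  assumes p: "p \<in> perms m" shows "flat p = p"
proof -
  have "{y\<in>set p. y \<le> x} = {1..x}" if "x \<in> set p" for x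
    using p that unfolding perms_def by auto
  thus ?thesis unfolding flat_def by (simp add: map_idI)
qed

lemma pflat_perms: "p \<in> perms m \<Longrightarrow> pflat m p = p"
  unfolding pflat_def using flat_perms length_perms by fastforce

lemma pflat_1:
  assumes "\<pi> \<in> perms N" "N \<ge> 1" shows "pflat 1 \<pi> = [1]"
proof -
  obtain a l where "\<pi> = a # l" using length_perms[OF assms(1)] assms(2) by (cases \<pi>) auto
  moreover have "{y. y = a \<and> y \<le> a} = {a}" by auto
  ultimately show ?thesis by (simp add: pflat_def flat_def)
qed

lemma append_upt_in_perms:
  assumes "p \<in> perms m" "m \<le> N"
  shows "p @ [Suc m..<Suc N] \<in> perms N" and "pflat m (p @ [Suc m..<Suc N]) = p"
  using assms length_perms[OF assms(1)] pflat_perms[OF assms(1)]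
  unfolding perms_def pflat_def by auto

lemma finite_ext: "finite (ext p)"
  unfolding ext_def using finite_perms by simp

lemma in_extD: "q \<in> ext p \<Longrightarrow> q \<in> perms (Suc (length p)) \<and> pflat (length p) q = p"
  unfolding ext_def contains_def by auto

lemma prefixed_contains:
  assumes "prefixed N p \<pi>" "prefixed N p' \<pi>" "length p' \<le> length p"
  shows "contains p p'"
  using assms pflat_pflat[of "length p'" "length p" \<pi>] unfolding prefixed_def contains_def by simp

subsection \<open>Weights and probabilities\<close>

lemma Dw_pflat: "Dw N c \<theta> p = (\<Sum>\<pi>\<in>{\<pi>\<in>perms N. pflat (length p) \<pi> = p}. \<theta> ^ c \<pi>)"
  unfolding Dw_def prefixed_def by (rule sum.cong) auto

lemma Dw_pos:
  assumes "\<theta> > 0" "p \<in> perms m" "m \<le> N"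
  shows "Dw N c \<theta> p > 0"
  unfolding Dw_pflat using assms append_upt_in_perms[OF assms(2,3)] length_perms[OF assms(2)]
  by (intro sum_pos2[where i = "p @ [Suc m..<Suc N]"]) (auto simp: finite_perms)

lemma Zsum_eq_Dw_1:
  assumes "N \<ge> 1" shows "Zsum N c \<theta> = Dw N c \<theta> [1]"
proof -
  have "{\<pi>\<in>perms N. pflat (length [1::nat]) \<pi> = [1]} = perms N" using pflat_1 assms by auto
  thus ?thesis unfolding Zsum_def Dw_pflat by simp
qed

lemma Dw_mult_Sstrike:
  "Dw N c \<theta> p \<noteq> 0 \<Longrightarrow> Dw N c \<theta> p * Sstrike N c \<theta> p = (\<Sum>\<pi>\<in>{\<pi>\<in>perms N. winnable N p \<pi>}. \<theta> ^ c \<pi>)"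
  unfolding Sstrike_def by simp

lemma Sstrike_nonneg: "\<theta> > 0 \<Longrightarrow> 0 \<le> Sstrike N c \<theta> p"
  unfolding Sstrike_def Dw_def by (intro divide_nonneg_nonneg sum_nonneg) auto

lemma positive_full_length: "\<theta> > 0 \<Longrightarrow> length p = N \<Longrightarrow> positive N c \<theta> p"
  unfolding positive_def Sopen_def using Sstrike_nonneg by simp

lemma Sclosed_if_positive: "positive N c \<theta> p \<Longrightarrow> Sclosed N c \<theta> p = Sstrike N c \<theta> p"
  unfolding Sclosed_def positive_def by simp

lemma Sclosed_if_not_positive: "\<not> positive N c \<theta> p \<Longrightarrow> Sclosed N c \<theta> p = Sopen N c \<theta> p"
  unfolding Sclosed_def positive_def by simp

lemma Sbar_rec_eq_Sclosed:
  assumes "length p \<le> N"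
  shows "Sbar_rec N c \<theta> (N - length p) p = Sclosed N c \<theta> p"
proof (cases "length p = N")
  case False
  hence "N - length p = Suc (N - Suc (length p))" using assms by simp
  thus ?thesis using False by (simp add: Sclosed_def Sopen_def)
qed (simp add: Sclosed_def Sopen_def)

lemma Sopen_eq:
  assumes "length p < N"
  shows "Sopen N c \<theta> p = (\<Sum>q\<in>ext p. Dw N c \<theta> q * Sclosed N c \<theta> q) / Dw N c \<theta> p"
proof -
  have "Sbar_rec N c \<theta> (N - Suc (length p)) q = Sclosed N c \<theta> q" if "q \<in> ext p" for q
  proof -
    have "length q = Suc (length p)" using in_extD[OF that] length_perms by blast
    thus ?thesis using Sbar_rec_eq_Sclosed[of q N c \<theta>] assms by simp
  qed
  thus ?thesis unfolding Sopen_def using assms by simp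
qed

subsection \<open>Minimal positive prefixes\<close>

lemma finite_minpos: "finite (minpos N c \<theta>)"
  using finite_perms unfolding minpos_def prefixes_def by simp

lemma minpos_if_first_positive:
  assumes p: "p \<in> perms m" and "1 \<le> m" "m \<le> N" "positive N c \<theta> p"
    and below: "\<forall>j\<in>{1..<m}. \<not> positive N c \<theta> (pflat j p)"
  shows "p \<in> minpos N c \<theta>"
proof -
  have "\<not> positive N c \<theta> p'" if p': "p' \<in> prefixes N" "contains p p'" "p' \<noteq> p" for p'
  proof -
    obtain j where j: "1 \<le> j" "p' \<in> perms j" using p'(1) unfolding prefixes_def by auto
    have "j \<le> m" and pj: "pflat j p = p'"
      using p'(2) length_perms[OF j(2)] length_perms[OF p] unfolding contains_def by auto
    moreover have "j \<noteq> m" using pj pflat_perms[OF p] p'(3) by auto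
    ultimately show ?thesis using below j(1) by auto
  qed
  moreover have "p \<in> prefixes N" unfolding prefixes_def using assms(1-3) by auto
  ultimately show ?thesis unfolding minpos_def using assms(4) by auto
qed

lemma minpos_prefixed_unique:
  assumes "p \<in> minpos N c \<theta>" "p' \<in> minpos N c \<theta>" "prefixed N p \<pi>" "prefixed N p' \<pi>"
  shows "p = p'"
proof -
  have "q = q'" if "q \<in> minpos N c \<theta>" "q' \<in> minpos N c \<theta>" "prefixed N q \<pi>" "prefixed N q' \<pi>"
      "length q' \<le> length q" for q q'
    using that prefixed_contains[OF that(3,4,5)] unfolding minpos_def by auto
  from this[OF assms] this[OF assms(2,1,4,3)] show ?thesis by (metis nat_le_linear)
qed

lemma minpos_prefixed_exists:
  assumes "\<theta> > 0" "N \<ge> 1" "\<pi> \<in> perms N"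
  shows "\<exists>p\<in>minpos N c \<theta>. prefixed N p \<pi>"
proof -
  define P where "P j \<longleftrightarrow> 1 \<le> j \<and> j \<le> N \<and> positive N c \<theta> (pflat j \<pi>)" for j
  define m where "m = (LEAST j. P j)"
  have "P N" unfolding P_def
    using assms positive_full_length length_perms pflat_in_perms[OF assms(3) order_refl] by blast
  hence Pm: "P m" unfolding m_def by (rule LeastI)
  define p where "p = pflat m \<pi>"
  have p: "p \<in> perms m" unfolding p_def using Pm pflat_in_perms[OF assms(3)] unfolding P_def by simp
  have "\<not> P j" if "j < m" for j using not_less_Least that unfolding m_def by blast
  hence "\<not> positive N c \<theta> (pflat j p)" if "j \<in> {1..<m}" for j
    using that Pm pflat_pflat[of j m \<pi>] unfolding P_def p_def by auto
  hence "p \<in> minpos N c \<theta>" using minpos_if_first_positive[OF p] Pm unfolding P_def p_def by blast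
  moreover have "prefixed N p \<pi>" unfolding prefixed_def using assms(3) length_perms[OF p] p_def by simp
  ultimately show ?thesis by blast
qed

lemma accepted_minpos:
  assumes "p \<in> minpos N c \<theta>" "prefixed N p \<pi>"
  shows "accepted N (\<lambda>q. q \<in> minpos N c \<theta>) \<pi> = length p"
proof -
  have p: "1 \<le> length p" "length p \<le> N"
    using assms(1) length_perms unfolding minpos_def prefixes_def by auto
  have "length p \<le> i" if i: "1 \<le> i" "i \<le> N" "pflat i \<pi> \<in> minpos N c \<theta> \<or> i = N" for i
  proof -
    have len: "length (pflat i \<pi>) = i"
      using assms(2) i length_perms pflat_in_perms unfolding prefixed_def by blast
    hence "prefixed N (pflat i \<pi>) \<pi>" using assms(2) unfolding prefixed_def by simp
    hence "pflat i \<pi> \<in> minpos N c \<theta> \<Longrightarrow> length p = i"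
      using minpos_prefixed_unique[OF assms(1) _ assms(2)] len by auto
    thus ?thesis using i p by auto
  qed
  thus ?thesis unfolding accepted_def using assms p unfolding prefixed_def
    by (intro Least_equality) auto
qed

subsection \<open>Backward induction\<close>

definition accepted_from :: "nat \<Rightarrow> (nat list \<Rightarrow> bool) \<Rightarrow> nat \<Rightarrow> nat list \<Rightarrow> nat" where
  "accepted_from N s k \<pi> = (LEAST i. k \<le> i \<and> i \<le> N \<and> (s (pflat i \<pi>) \<or> i = N))"

text \<open>Weight won on the p-prefixed permutations when the candidates before length p are
  rejected regardless of s.\<close>
definition win_mass :: "nat \<Rightarrow> (nat list \<Rightarrow> nat) \<Rightarrow> real \<Rightarrow> (nat list \<Rightarrow> bool) \<Rightarrow> nat list \<Rightarrow> real" where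
  "win_mass N c \<theta> s p = (\<Sum>\<pi>\<in>{\<pi>\<in>perms N. pflat (length p) \<pi> = p \<and>
      \<pi> ! (accepted_from N s (length p) \<pi> - 1) = N}. \<theta> ^ c \<pi>)"

lemma accepted_from_stop: "k \<le> N \<Longrightarrow> s (pflat k \<pi>) \<or> k = N \<Longrightarrow> accepted_from N s k \<pi> = k"
  unfolding accepted_from_def by (rule Least_equality) auto

lemma accepted_from_pass:
  assumes "k < N" "\<not> s (pflat k \<pi>)"
  shows "accepted_from N s k \<pi> = accepted_from N s (Suc k) \<pi>"
proof -
  have "(k \<le> i \<and> i \<le> N \<and> (s (pflat i \<pi>) \<or> i = N))
      \<longleftrightarrow> (Suc k \<le> i \<and> i \<le> N \<and> (s (pflat i \<pi>) \<or> i = N))" for i using assms by (cases "i = k") auto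
  thus ?thesis unfolding accepted_from_def by simp
qed

lemma win_mass_stop:
  assumes "\<theta> > 0" "p \<in> perms m" "m \<le> N" "s p \<or> m = N"
  shows "win_mass N c \<theta> s p = Dw N c \<theta> p * Sstrike N c \<theta> p"
proof -
  have "{\<pi>\<in>perms N. pflat m \<pi> = p \<and> \<pi> ! (accepted_from N s m \<pi> - 1) = N}
      = {\<pi>\<in>perms N. winnable N p \<pi>}"
    using accepted_from_stop[of m N s] assms length_perms[OF assms(2)]
    unfolding winnable_def prefixed_def by auto
  moreover have "Dw N c \<theta> p \<noteq> 0" using Dw_pos[OF assms(1-3), where c = c] by simp
  ultimately show ?thesis
    unfolding win_mass_def using length_perms[OF assms(2)] by (simp add: Dw_mult_Sstrike)
qed

lemma win_mass_pass:
  assumes p: "p \<in> perms m" and "m < N" "\<not> s p"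
  shows "win_mass N c \<theta> s p = (\<Sum>q\<in>ext p. win_mass N c \<theta> s q)"
proof -
  define wins_from where "wins_from k \<pi> \<longleftrightarrow> \<pi> ! (accepted_from N s k \<pi> - 1) = N" for k \<pi>
  define S where "S = {\<pi>\<in>perms N. pflat m \<pi> = p \<and> wins_from m \<pi>}"
  have lp: "length p = m" using length_perms[OF p] .
  have extends_p: "pflat m \<pi> = p" if "q \<in> ext p" "pflat (Suc m) \<pi> = q" for q \<pi>
    using in_extD[OF that(1)] that(2) pflat_pflat[of m "Suc m" \<pi>] lp by simp
  have "pflat (Suc m) \<pi> \<in> ext p" if "\<pi> \<in> S" for \<pi>
  proof -
    have "pflat (Suc m) \<pi> \<in> perms (Suc m)"
      using that pflat_in_perms[of \<pi> N "Suc m"] \<open>m < N\<close> unfolding S_def by simp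
    thus ?thesis using that pflat_pflat[of m "Suc m" \<pi>] lp length_perms
      unfolding S_def ext_def contains_def by auto
  qed
  hence "sum (\<lambda>\<pi>. \<theta> ^ c \<pi>) S = (\<Sum>q\<in>ext p. \<Sum>\<pi>\<in>{\<pi>\<in>S. pflat (Suc m) \<pi> = q}. \<theta> ^ c \<pi>)"
    using finite_perms finite_ext unfolding S_def by (intro sum.group[symmetric]) auto
  also have "\<dots> = (\<Sum>q\<in>ext p. win_mass N c \<theta> s q)"
  proof (rule sum.cong[OF refl])
    fix q assume q: "q \<in> ext p"
    have "wins_from m \<pi> = wins_from (Suc m) \<pi>" if "pflat m \<pi> = p" for \<pi>
      using accepted_from_pass[of m N s \<pi>] assms(2,3) that unfolding wins_from_def by simp
    hence "{\<pi>\<in>S. pflat (Suc m) \<pi> = q} = {\<pi>\<in>perms N. pflat (Suc m) \<pi> = q \<and> wins_from (Suc m) \<pi>}"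
      unfolding S_def using extends_p[OF q] by auto
    thus "(\<Sum>\<pi>\<in>{\<pi>\<in>S. pflat (Suc m) \<pi> = q}. \<theta> ^ c \<pi>) = win_mass N c \<theta> s q"
      unfolding win_mass_def wins_from_def using in_extD[OF q] length_perms lp by auto
  qed
  finally show ?thesis unfolding win_mass_def S_def wins_from_def lp .
qed

lemma win_mass_le_Sclosed:
  assumes "\<theta> > 0" "m \<le> N" "p \<in> perms m"
  shows "win_mass N c \<theta> s p \<le> Dw N c \<theta> p * Sclosed N c \<theta> p"
  using assms(2,3)
proof (induction m arbitrary: p rule: inc_induct)
  case base
  thus ?case using win_mass_stop[OF assms(1) base] Dw_pos[OF assms(1) base, where c = c]
    by (simp add: Sclosed_def)
next
  case (step m)
  have Dp: "Dw N c \<theta> p > 0" using Dw_pos[OF assms(1) step.prems] step.hyps by simp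
  show ?case
  proof (cases "s p")
    case True
    thus ?thesis using win_mass_stop[OF assms(1) step.prems] step.hyps Dp
      by (simp add: Sclosed_def)
  next
    case False
    have lp: "length p = m" using length_perms[OF step.prems] .
    have "win_mass N c \<theta> s p = (\<Sum>q\<in>ext p. win_mass N c \<theta> s q)"
      using win_mass_pass[where s = s, OF step.prems step.hyps(2) False] by simp
    also have "\<dots> \<le> (\<Sum>q\<in>ext p. Dw N c \<theta> q * Sclosed N c \<theta> q)"
      using step.IH in_extD lp by (intro sum_mono) auto
    also have "\<dots> = Dw N c \<theta> p * Sopen N c \<theta> p"
      using Sopen_eq[of p N c \<theta>] step.hyps lp Dp by simp
    also have "\<dots> \<le> Dw N c \<theta> p * Sclosed N c \<theta> p"
      using Dp by (simp add: Sclosed_def)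
    finally show ?thesis .
  qed
qed

lemma win_mass_minpos_eq_Sclosed:
  assumes "\<theta> > 0" "m \<le> N" "p \<in> perms m" "1 \<le> m"
    "\<forall>j\<in>{1..<m}. \<not> positive N c \<theta> (pflat j p)"
  shows "win_mass N c \<theta> (\<lambda>q. q \<in> minpos N c \<theta>) p = Dw N c \<theta> p * Sclosed N c \<theta> p"
  using assms(2-5)
proof (induction m arbitrary: p rule: inc_induct)
  case base
  have "positive N c \<theta> p" using positive_full_length[OF assms(1)] length_perms[OF base(1)] by simp
  thus ?case using win_mass_stop[OF assms(1) base(1) order_refl] Sclosed_if_positive by simp
next
  case (step m)
  have Dp: "Dw N c \<theta> p > 0" using Dw_pos[OF assms(1) step.prems(1)] step.hyps by simp
  have lp: "length p = m" using length_perms[OF step.prems(1)] .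
  show ?case
  proof (cases "positive N c \<theta> p")
    case True
    hence "p \<in> minpos N c \<theta>"
      using minpos_if_first_positive[OF step.prems(1,2) _ _ step.prems(3)] step.hyps by simp
    thus ?thesis using win_mass_stop[OF assms(1) step.prems(1)] step.hyps Sclosed_if_positive[OF True]
      by simp
  next
    case False
    hence "p \<notin> minpos N c \<theta>" unfolding minpos_def by auto
    hence "win_mass N c \<theta> (\<lambda>q. q \<in> minpos N c \<theta>) p
        = (\<Sum>q\<in>ext p. win_mass N c \<theta> (\<lambda>q. q \<in> minpos N c \<theta>) q)"
      by (intro win_mass_pass[OF step.prems(1) step.hyps(2)])
    also have "\<dots> = (\<Sum>q\<in>ext p. Dw N c \<theta> q * Sclosed N c \<theta> q)"
    proof (rule sum.cong[OF refl])
      fix q assume "q \<in> ext p"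
      hence q: "q \<in> perms (Suc m)" "pflat m q = p" using in_extD lp by auto
      have "\<not> positive N c \<theta> (pflat j q)" if "j \<in> {1..<Suc m}" for j
      proof (cases "j = m")
        case False
        hence "pflat j q = pflat j p" using q(2) pflat_pflat[of j m q] that by simp
        thus ?thesis using step.prems(3) False that by simp
      qed (use q(2) \<open>\<not> positive N c \<theta> p\<close> in simp)
      thus "win_mass N c \<theta> (\<lambda>q. q \<in> minpos N c \<theta>) q = Dw N c \<theta> q * Sclosed N c \<theta> q"
        using step.IH q(1) by simp
    qed
    also have "\<dots> = Dw N c \<theta> p * Sclosed N c \<theta> p"
      using Sopen_eq[of p N c \<theta>] step.hyps lp Dp Sclosed_if_not_positive[OF False] by simp
    finally show ?thesis .
  qed
qed

subsection \<open>The minimal positive prefix strategy\<close>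

lemma win_prob_eq_win_mass:
  assumes "N \<ge> 1"
  shows "win_prob N c \<theta> s = win_mass N c \<theta> s [1] / Dw N c \<theta> [1]"
proof -
  have "{\<pi>\<in>perms N. wins N s \<pi>}
      = {\<pi>\<in>perms N. pflat 1 \<pi> = [1] \<and> \<pi> ! (accepted_from N s 1 \<pi> - 1) = N}"
    using pflat_1 assms unfolding wins_def accepted_def accepted_from_def by auto
  thus ?thesis unfolding win_prob_def win_mass_def Zsum_eq_Dw_1[OF assms] by simp
qed

lemma winning_weight_minpos:
  assumes "\<theta> > 0" "N \<ge> 1"
  shows "(\<Sum>\<pi>\<in>{\<pi>\<in>perms N. wins N (\<lambda>q. q \<in> minpos N c \<theta>) \<pi>}. \<theta> ^ c \<pi>)
       = (\<Sum>p\<in>minpos N c \<theta>. Dw N c \<theta> p * Sstrike N c \<theta> p)"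
proof -
  have "{\<pi>\<in>perms N. wins N (\<lambda>q. q \<in> minpos N c \<theta>) \<pi>}
      = (\<Union>p\<in>minpos N c \<theta>. {\<pi>\<in>perms N. winnable N p \<pi>})"
  proof (intro equalityI subsetI)
    fix \<pi> assume "\<pi> \<in> {\<pi>\<in>perms N. wins N (\<lambda>q. q \<in> minpos N c \<theta>) \<pi>}"
    moreover obtain p where "p \<in> minpos N c \<theta>" "prefixed N p \<pi>"
      using minpos_prefixed_exists[OF assms] calculation by blast
    ultimately show "\<pi> \<in> (\<Union>p\<in>minpos N c \<theta>. {\<pi>\<in>perms N. winnable N p \<pi>})"
      using accepted_minpos unfolding wins_def winnable_def by auto
  next
    fix \<pi> assume "\<pi> \<in> (\<Union>p\<in>minpos N c \<theta>. {\<pi>\<in>perms N. winnable N p \<pi>})"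
    thus "\<pi> \<in> {\<pi>\<in>perms N. wins N (\<lambda>q. q \<in> minpos N c \<theta>) \<pi>}"
      using accepted_minpos unfolding wins_def winnable_def by auto
  qed
  moreover have "{\<pi>\<in>perms N. winnable N p \<pi>} \<inter> {\<pi>\<in>perms N. winnable N p' \<pi>} = {}"
    if "p \<in> minpos N c \<theta>" "p' \<in> minpos N c \<theta>" "p \<noteq> p'" for p p'
    using minpos_prefixed_unique[OF that(1,2)] that(3) unfolding winnable_def by blast
  ultimately have "(\<Sum>\<pi>\<in>{\<pi>\<in>perms N. wins N (\<lambda>q. q \<in> minpos N c \<theta>) \<pi>}. \<theta> ^ c \<pi>)
      = (\<Sum>p\<in>minpos N c \<theta>. \<Sum>\<pi>\<in>{\<pi>\<in>perms N. winnable N p \<pi>}. \<theta> ^ c \<pi>)"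
    by (simp add: sum.UNION_disjoint finite_minpos finite_perms)
  also have "\<dots> = (\<Sum>p\<in>minpos N c \<theta>. Dw N c \<theta> p * Sstrike N c \<theta> p)"
  proof (rule sum.cong[OF refl])
    fix p assume "p \<in> minpos N c \<theta>"
    then obtain m where "p \<in> perms m" "m \<le> N" unfolding minpos_def prefixes_def by auto
    hence "Dw N c \<theta> p \<noteq> 0" using Dw_pos[OF assms(1), where c = c] by fastforce
    thus "(\<Sum>\<pi>\<in>{\<pi>\<in>perms N. winnable N p \<pi>}. \<theta> ^ c \<pi>) = Dw N c \<theta> p * Sstrike N c \<theta> p"
      by (simp add: Dw_mult_Sstrike)
  qed
  finally show ?thesis .
qed

theorem mainTheorem1:
  fixes N :: nat and c :: "nat list \<Rightarrow> nat" and \<theta> :: real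
  assumes "N \<ge> 1" and "\<theta> > 0"
  shows "(\<forall>\<pi>\<in>perms N. \<exists>!p. p \<in> minpos N c \<theta> \<and> prefixed N p \<pi>)
       \<and> (\<forall>s. win_prob N c \<theta> s \<le> win_prob N c \<theta> (\<lambda>q. q \<in> minpos N c \<theta>))
       \<and> win_prob N c \<theta> (\<lambda>q. q \<in> minpos N c \<theta>) = Sclosed N c \<theta> [1]
       \<and> win_prob N c \<theta> (\<lambda>q. q \<in> minpos N c \<theta>) =
           (\<Sum>p\<in>minpos N c \<theta>. Dw N c \<theta> p * Sstrike N c \<theta> p) / Zsum N c \<theta>"
proof -
  have one: "[1] \<in> perms 1" by (simp add: perms_def)
  have D1: "Dw N c \<theta> [1] > 0" using Dw_pos[OF assms(2) one assms(1)] .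
  have value_minpos: "win_prob N c \<theta> (\<lambda>q. q \<in> minpos N c \<theta>) = Sclosed N c \<theta> [1]"
    using win_prob_eq_win_mass[OF assms(1)] D1
      win_mass_minpos_eq_Sclosed[OF assms(2) assms(1) one order_refl] by simp
  have "win_prob N c \<theta> s \<le> Sclosed N c \<theta> [1]" for s
    using win_prob_eq_win_mass[OF assms(1)] D1 win_mass_le_Sclosed[OF assms(2,1) one]
    by (simp add: divide_le_eq mult.commute)
  moreover have "\<forall>\<pi>\<in>perms N. \<exists>!p. p \<in> minpos N c \<theta> \<and> prefixed N p \<pi>"
    using minpos_prefixed_exists[OF assms(2,1)] minpos_prefixed_unique by blast
  moreover have "win_prob N c \<theta> (\<lambda>q. q \<in> minpos N c \<theta>)
      = (\<Sum>p\<in>minpos N c \<theta>. Dw N c \<theta> p * Sstrike N c \<theta> p) / Zsum N c \<theta>"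
    unfolding win_prob_def winning_weight_minpos[OF assms(2,1)] ..
  ultimately show ?thesis using value_minpos by simp
qed

end
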